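(* Let $D\ge 1$. If a complex number $\alpha$ can be computed by a root computation tree of degree $D$, then the field extension degree $[\mathbf{Q}(\alpha):\mathbf{Q}]$ is $D$-smooth, i.e., it has no prime factor greater than $D$. In particular, if $\alpha$ can be computed by a quadratic computation tree, then $[\mathbf{Q}(\alpha):\mathbf{Q}]$ is a power of two.
   Context: An algebraic computation tree is a rooted tree whose computation nodes compute a value as the sum, difference, product or quotient of integer constants and values computed at ancestor nodes, and whose decision nodes test whether a computed value is greater than zero and branch. A root computation tree additionally allows computing a complex root of a univariate polynomial whose coefficients are integers or previously computed values, and complex conjugation; its degree is the maximum degree of any polynomial used. A quadratic computation tree is an algebraic computation tree additionally allowing square roots and complex conjugation. A value is computed by a tree if it is computed at some node. *)

theory Defs
  imports Complex_Main "HOL-Computational_Algebra.Polynomial"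
begin

text \<open>An operand is either an integer constant or a reference to the value
computed at the i-th computation node (counted from the root) on the path
from the root to the current node, i.e. a value computed at an ancestor.\<close>

datatype operand = Const int | Val nat

datatype instr =
    Add operand operand
  | Sub operand operand
  | Mul operand operand
  | Quot operand operand
  | RootOf "operand list"   \<comment> \<open>a complex root of c0 + c1 x + ... + ck x^k\<close>
  | Conj operand
  | Sqrt operand

datatype ctree =
    Stop
  | Comp instr ctree
  | Dec operand ctree ctree   \<comment> \<open>test value > 0; yes-branch, no-branch\<close>

fun opnd_ok :: "complex list \<Rightarrow> operand \<Rightarrow> bool" where
  "opnd_ok env (Const k) = True"
| "opnd_ok env (Val i) = (i < length env)"

fun opnd_val :: "complex list \<Rightarrow> operand \<Rightarrow> complex" where
  "opnd_val env (Const k) = of_int k"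
| "opnd_val env (Val i) = env ! i"

definition cpos :: "complex \<Rightarrow> bool" where
  "cpos z \<longleftrightarrow> Im z = 0 \<and> Re z > 0"

inductive instr_res :: "nat \<Rightarrow> complex list \<Rightarrow> instr \<Rightarrow> complex \<Rightarrow> bool" where
  add: "opnd_ok env a \<Longrightarrow> opnd_ok env b \<Longrightarrow>
        instr_res D env (Add a b) (opnd_val env a + opnd_val env b)"
| sub: "opnd_ok env a \<Longrightarrow> opnd_ok env b \<Longrightarrow>
        instr_res D env (Sub a b) (opnd_val env a - opnd_val env b)"
| mul: "opnd_ok env a \<Longrightarrow> opnd_ok env b \<Longrightarrow>
        instr_res D env (Mul a b) (opnd_val env a * opnd_val env b)"
| quot: "opnd_ok env a \<Longrightarrow> opnd_ok env b \<Longrightarrow> opnd_val env b \<noteq> 0 \<Longrightarrow>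
        instr_res D env (Quot a b) (opnd_val env a / opnd_val env b)"
| root: "list_all (opnd_ok env) cs \<Longrightarrow>
         Poly (map (opnd_val env) cs) \<noteq> 0 \<Longrightarrow>
         degree (Poly (map (opnd_val env) cs)) \<le> D \<Longrightarrow>
         poly (Poly (map (opnd_val env) cs)) z = 0 \<Longrightarrow>
         instr_res D env (RootOf cs) z"
| conj: "opnd_ok env a \<Longrightarrow> instr_res D env (Conj a) (cnj (opnd_val env a))"
| sqrt: "opnd_ok env a \<Longrightarrow> z ^ 2 = opnd_val env a \<Longrightarrow> instr_res D env (Sqrt a) z"

text \<open>computes D env t z: z is computed at some node of t when t is run with
the ancestor values env.\<close>
inductive computes :: "nat \<Rightarrow> complex list \<Rightarrow> ctree \<Rightarrow> complex \<Rightarrow> bool" where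
  here: "instr_res D env ins z \<Longrightarrow> computes D env (Comp ins t) z"
| below: "instr_res D env ins z \<Longrightarrow> computes D (env @ [z]) t w \<Longrightarrow>
          computes D env (Comp ins t) w"
| dec_yes: "opnd_ok env a \<Longrightarrow> cpos (opnd_val env a) \<Longrightarrow> computes D env t1 w \<Longrightarrow>
            computes D env (Dec a t1 t2) w"
| dec_no: "opnd_ok env a \<Longrightarrow> \<not> cpos (opnd_val env a) \<Longrightarrow> computes D env t2 w \<Longrightarrow>
           computes D env (Dec a t1 t2) w"

fun is_sqrt :: "instr \<Rightarrow> bool" where
  "is_sqrt (Sqrt a) = True" | "is_sqrt _ = False"

fun is_root :: "instr \<Rightarrow> bool" where
  "is_root (RootOf cs) = True" | "is_root _ = False"

text \<open>Root computation trees: no square-root nodes (roots via RootOf, whose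
degree bound is the parameter D of computes).  Quadratic computation trees:
no RootOf nodes.\<close>
fun root_tree :: "ctree \<Rightarrow> bool" where
  "root_tree Stop = True"
| "root_tree (Comp i t) = (\<not> is_sqrt i \<and> root_tree t)"
| "root_tree (Dec a t1 t2) = (root_tree t1 \<and> root_tree t2)"

fun quad_tree :: "ctree \<Rightarrow> bool" where
  "quad_tree Stop = True"
| "quad_tree (Comp i t) = (\<not> is_root i \<and> quad_tree t)"
| "quad_tree (Dec a t1 t2) = (quad_tree t1 \<and> quad_tree t2)"

definition computable_root :: "nat \<Rightarrow> complex \<Rightarrow> bool" where
  "computable_root D z \<longleftrightarrow> (\<exists>t. root_tree t \<and> computes D [] t z)"

definition computable_quad :: "complex \<Rightarrow> bool" where
  "computable_quad z \<longleftrightarrow> (\<exists>t. quad_tree t \<and> computes 0 [] t z)"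

definition ext_degree :: "complex \<Rightarrow> nat" where
  "ext_degree z = (LEAST n. \<exists>p :: rat poly. p \<noteq> 0 \<and> degree p = n \<and>
                            poly (map_poly of_rat p) z = 0)"

end

theory Submission
  imports "HOL-Algebra.Finite_Extensions" Defs
begin

text \<open>Run the tree along the path to the computed value and adjoin, one at a time, every value
computed on that path together with its complex conjugate.  Since the operands of each node, and
their conjugates, already lie in the current field \<open>K\<close>, the new value is a root of a nonzero
polynomial of degree at most \<open>D\<close> over \<open>K\<close> (degree 2 for square roots), and so is its conjugate,
because conjugation commutes with every operation of the tree.  Hence each adjunction multiplies
\<open>[K:\<rat>]\<close> by a number between 1 and \<open>D\<close>, and the final field \<open>K\<close>, which contains \<open>\<alpha>\<close>, has
\<open>D\<close>-smooth degree over \<open>\<rat>\<close>.  The tower \<open>\<rat> \<subseteq> \<rat>(\<alpha>) \<subseteq> K\<close> shows that \<open>[\<rat>(\<alpha>):\<rat>]\<close> divides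
\<open>[K:\<rat>]\<close>.  Square roots are roots of degree 2, so for quadratic trees the degree is
2-smooth, i.e. a power of two.\<close>

section \<open>The complex numbers as a field in the sense of HOL-Algebra\<close>

definition complex_field :: "complex ring" where
  "complex_field = \<lparr>carrier = UNIV, monoid.mult = (*), one = 1, ring.zero = 0, add = (+)\<rparr>"

lemma complex_field_simps [simp]:
  "carrier complex_field = UNIV" "mult complex_field = (*)" "one complex_field = 1"
  "zero complex_field = 0" "add complex_field = (+)"
  by (auto simp: complex_field_def)

lemma field_complex_field: "field complex_field"
proof -
  have "\<exists>y. x + y = 0" for x :: complex
    using add.right_inverse by blast
  moreover have "x \<noteq> 0 \<Longrightarrow> \<exists>y. x * y = 1" for x :: complex
    by (rule exI[of _ "inverse x"]) auto
  ultimately show ?thesis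
    unfolding complex_field_def
    by unfold_locales (auto simp: algebra_simps Units_def)
qed

interpretation C: domain complex_field
  using field_complex_field by (rule field.axioms(1))

lemma complex_field_inv [simp]: "x \<noteq> 0 \<Longrightarrow> inv\<^bsub>complex_field\<^esub> x = inverse x"
  by (metis C.inv_char complex_field_simps(1,2,3) UNIV_I mult.commute right_inverse)

lemma complex_field_a_inv [simp]: "\<ominus>\<^bsub>complex_field\<^esub> x = - x"
  by (metis C.add.inv_equality complex_field_simps(1,4,5) UNIV_I add.right_inverse add.commute)

lemma complex_subfield_closed:
  assumes "subfield K complex_field"
  shows "0 \<in> K" "1 \<in> K" "x \<in> K \<Longrightarrow> - x \<in> K" "x \<in> K \<Longrightarrow> inverse x \<in> K"
    "x \<in> K \<Longrightarrow> y \<in> K \<Longrightarrow> x + y \<in> K" "x \<in> K \<Longrightarrow> y \<in> K \<Longrightarrow> x * y \<in> K"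
    "x \<in> K \<Longrightarrow> y \<in> K \<Longrightarrow> x - y \<in> K" "x \<in> K \<Longrightarrow> y \<in> K \<Longrightarrow> x / y \<in> K"
proof -
  note sub = subringE[OF subfieldE(1)[OF assms], simplified]
  show zero: "0 \<in> K" and "1 \<in> K"
    using sub(2,3) .
  show uminus: "x \<in> K \<Longrightarrow> - x \<in> K" for x
    using sub(5) .
  show add: "x \<in> K \<Longrightarrow> y \<in> K \<Longrightarrow> x + y \<in> K" for x y
    using sub(7) .
  show mult: "x \<in> K \<Longrightarrow> y \<in> K \<Longrightarrow> x * y \<in> K" for x y
    using sub(6) .
  show inverse: "x \<in> K \<Longrightarrow> inverse x \<in> K" for x
    using C.subfield_m_inv(1)[OF assms, of x] zero by (cases "x = 0") auto
  show "x \<in> K \<Longrightarrow> y \<in> K \<Longrightarrow> x - y \<in> K" for x y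
    using add[OF _ uminus, of x y] by simp
  show "x \<in> K \<Longrightarrow> y \<in> K \<Longrightarrow> x / y \<in> K" for x y
    using mult[OF _ inverse, of x y] by (simp add: divide_inverse)
qed

lemma Rats_subset_complex_subfield:
  assumes K: "subfield K complex_field"
  shows "\<rat> \<subseteq> K"
proof
  have "of_int k \<in> K" for k
    by (induction k rule: int_induct[of _ 0]) (simp_all add: complex_subfield_closed(1,2,5,7)[OF K])
  moreover fix x :: complex assume "x \<in> \<rat>"
  then obtain a b where "x = of_int a / of_int b"
    by (rule Rats_cases')
  ultimately show "x \<in> K"
    using complex_subfield_closed(8)[OF K] by simp
qed

lemma subfield_Rats: "subfield \<rat> complex_field"
proof (rule field.subfieldI'[OF field_complex_field])
  show "subring \<rat> complex_field"
    by (rule C.subringI) auto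
  show "inv\<^bsub>complex_field\<^esub> k \<in> \<rat>" if "k \<in> \<rat> - {\<zero>\<^bsub>complex_field\<^esub>}" for k
    using that by auto
qed

text \<open>HOL-Algebra represents a polynomial by the list of its coefficients, leading one first.\<close>

lemma eval_rev_coeffs: "C.eval (rev (coeffs q)) x = poly q x"
proof (induction q rule: pCons_induct)
  case (pCons a p)
  show ?case
  proof (cases "p = 0")
    case True
    with pCons have "a \<noteq> 0" by simp
    with True show ?thesis
      using C.eval_append_aux[of "[]" a x] by simp
  next
    case False
    then show ?thesis
      using C.eval_append_aux[of "rev (coeffs p)" a x] pCons by (simp add: algebra_simps)
  qed
qed simp

lemma polynomial_rev_coeffs:
  assumes "\<And>i. coeff q i \<in> K"
  shows "polynomial\<^bsub>complex_field\<^esub> K (rev (coeffs q))"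
proof (cases "q = 0")
  case False
  then have "hd (rev (coeffs q)) \<noteq> 0"
    by (simp add: hd_rev last_coeffs_eq_coeff_degree)
  moreover have "set (coeffs q) \<subseteq> K"
    using assms by (auto simp: coeffs_def)
  ultimately show ?thesis
    by (simp add: polynomial_def)
qed (simp add: polynomial_def)

lemma polynomial_imp_rev_coeffs:
  assumes p: "polynomial\<^bsub>complex_field\<^esub> K p" and "0 \<in> K"
  obtains q where "rev (coeffs q) = p" "\<And>i. coeff q i \<in> K"
proof
  let ?q = "Poly (rev p)"
  show "rev (coeffs ?q) = p"
  proof (cases p)
    case (Cons a p')
    with p have "a \<noteq> 0"
      by (simp add: polynomial_def)
    with Cons show ?thesis
      by (simp add: coeffs_Poly)
  qed simp
  have "set (rev p) \<subseteq> K"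
    using p by (auto simp: polynomial_def)
  then show "coeff ?q i \<in> K" for i
    using \<open>0 \<in> K\<close> nth_mem[of i "rev p"] by (auto simp: nth_default_def)
qed

section \<open>Algebraic numbers of bounded degree over a subfield\<close>

definition algebraic_deg_le :: "complex set \<Rightarrow> nat \<Rightarrow> complex \<Rightarrow> bool" where
  "algebraic_deg_le K d z \<longleftrightarrow>
     (\<exists>q. q \<noteq> 0 \<and> Polynomial.degree q \<le> d \<and> (\<forall>i. coeff q i \<in> K) \<and> poly q z = 0)"

lemma algebraic_deg_le_mono: "K \<subseteq> K' \<Longrightarrow> algebraic_deg_le K d z \<Longrightarrow> algebraic_deg_le K' d z"
  unfolding algebraic_deg_le_def by blast

lemma algebraic_deg_le_power_mem:
  assumes K: "subfield K complex_field" and "w ^ n \<in> K" "0 < n" "n \<le> d"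
  shows "algebraic_deg_le K d w"
  unfolding algebraic_deg_le_def
proof (intro exI conjI allI)
  let ?q = "monom 1 n - [:w ^ n:]"
  have "coeff ?q n = 1"
    using \<open>0 < n\<close> by (simp add: coeff_pCons')
  then show "?q \<noteq> 0"
    by (metis coeff_0 zero_neq_one)
  show "Polynomial.degree ?q \<le> d"
    using \<open>n \<le> d\<close> degree_diff_le[of "monom 1 n" n "[:w ^ n:]"] by (simp add: degree_monom_le)
  show "coeff ?q i \<in> K" for i
    using complex_subfield_closed[OF K] \<open>w ^ n \<in> K\<close> by (simp add: coeff_pCons')
  show "poly ?q w = 0"
    by (simp add: poly_monom)
qed

lemma algebraic_deg_le_imp_Irr:
  assumes K: "subfield K complex_field" and z: "algebraic_deg_le K d z"
  shows "(C.algebraic over K) z" and "Polynomials.degree (C.Irr K z) \<le> d"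
proof -
  obtain q where q: "q \<noteq> 0" "Polynomial.degree q \<le> d" "\<And>i. coeff q i \<in> K" "poly q z = 0"
    using z unfolding algebraic_deg_le_def by blast
  define p where "p = rev (coeffs q)"
  have p: "p \<in> carrier (K[X]\<^bsub>complex_field\<^esub>)" "p \<noteq> []" "C.eval p z = \<zero>\<^bsub>complex_field\<^esub>"
    using polynomial_rev_coeffs[OF q(3)] q(1,4)
    by (simp_all add: p_def univ_poly_carrier eval_rev_coeffs)
  show alg: "(C.algebraic over K) z"
    using C.algebraicI[OF p] by (simp add: over_def)
  have "C.Irr K z pdivides\<^bsub>complex_field\<^esub> p"
    using C.Irr_minimal[OF K _ alg p(1,3)] by simp
  then have "Polynomials.degree (C.Irr K z) \<le> length p - 1"
    using C.pdivides_imp_degree_le[OF subfieldE(1)[OF K] C.IrrE(1)[OF K _ alg] p(1,2)] by simp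
  also have "\<dots> \<le> d"
    using q(1,2) by (simp add: p_def length_coeffs)
  finally show "Polynomials.degree (C.Irr K z) \<le> d" .
qed

lemma algebraic_deg_le_Irr:
  assumes K: "subfield K complex_field" and alg: "(C.algebraic over K) z"
  shows "algebraic_deg_le K (Polynomials.degree (C.Irr K z)) z"
proof -
  let ?I = "C.Irr K z"
  have I: "polynomial\<^bsub>complex_field\<^esub> K ?I" "?I \<noteq> []" "C.eval ?I z = 0"
    using C.IrrE[OF K _ alg] C.pirreducibleE(1)[OF subfieldE(1)[OF K]]
    by (auto simp: univ_poly_carrier)
  obtain q where q: "rev (coeffs q) = ?I" "\<And>i. coeff q i \<in> K"
    using polynomial_imp_rev_coeffs[OF I(1) complex_subfield_closed(1)[OF K]] by blast
  have "q \<noteq> 0"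
    using q(1) I(2) by auto
  then have "Polynomial.degree q = Polynomials.degree ?I"
    using q(1) by (auto simp flip: q(1) simp: length_coeffs)
  then show ?thesis
    unfolding algebraic_deg_le_def
    using \<open>q \<noteq> 0\<close> q I(3) eval_rev_coeffs[of q z] by (intro exI[of _ q]) auto
qed

lemma complex_poly_over_Rats:
  fixes q :: "complex poly"
  assumes "\<And>i. coeff q i \<in> \<rat>"
  obtains p :: "rat poly" where "q = map_poly of_rat p"
proof
  have "inj (of_rat :: rat \<Rightarrow> complex)"
    by (rule injI) simp
  then have inv0: "inv_into UNIV of_rat (0::complex) = (0::rat)"
    by (metis inv_f_f of_rat_0)
  show "q = map_poly of_rat (map_poly (inv_into UNIV of_rat) q)"
  proof (rule poly_eqI)
    fix i
    have "coeff q i \<in> range of_rat"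
      using assms by (simp add: Rats_def)
    then show "coeff q i = coeff (map_poly of_rat (map_poly (inv_into UNIV of_rat) q)) i"
      by (simp add: coeff_map_poly inv0 f_inv_into_f)
  qed
qed

lemma algebraic_deg_le_Rats_iff:
  "algebraic_deg_le \<rat> n z \<longleftrightarrow>
     (\<exists>p :: rat poly. p \<noteq> 0 \<and> Polynomial.degree p \<le> n \<and> poly (map_poly of_rat p) z = 0)"
proof
  assume "algebraic_deg_le \<rat> n z"
  then obtain q where q: "q \<noteq> 0" "Polynomial.degree q \<le> n" "\<And>i. coeff q i \<in> \<rat>" "poly q z = 0"
    unfolding algebraic_deg_le_def by blast
  obtain p :: "rat poly" where "q = map_poly of_rat p"
    using complex_poly_over_Rats q(3) by blast
  with q show "\<exists>p :: rat poly. p \<noteq> 0 \<and> Polynomial.degree p \<le> n \<and> poly (map_poly of_rat p) z = 0"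
    by (intro exI[of _ p]) (auto simp: degree_map_poly)
next
  assume "\<exists>p :: rat poly. p \<noteq> 0 \<and> Polynomial.degree p \<le> n \<and> poly (map_poly of_rat p) z = 0"
  then obtain p :: "rat poly" where "p \<noteq> 0" "Polynomial.degree p \<le> n" "poly (map_poly of_rat p) z = 0"
    by blast
  then show "algebraic_deg_le \<rat> n z"
    unfolding algebraic_deg_le_def
    by (intro exI[of _ "map_poly of_rat p"]) (simp add: degree_map_poly coeff_map_poly map_poly_eq_0_iff)
qed

lemma ext_degree_eqI:
  assumes "algebraic_deg_le \<rat> n z" and "\<And>m. algebraic_deg_le \<rat> m z \<Longrightarrow> n \<le> m"
  shows "ext_degree z = n"
  unfolding ext_degree_def
proof (rule Least_equality)
  obtain p :: "rat poly" where p: "p \<noteq> 0" "Polynomial.degree p \<le> n" "poly (map_poly of_rat p) z = 0"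
    using assms(1) algebraic_deg_le_Rats_iff by blast
  moreover have "n \<le> Polynomial.degree p"
    using p assms(2) algebraic_deg_le_Rats_iff by blast
  ultimately show "\<exists>p :: rat poly. p \<noteq> 0 \<and> Polynomial.degree p = n \<and> poly (map_poly of_rat p) z = 0"
    using le_antisym by blast
  show "n \<le> m" if "\<exists>p :: rat poly. p \<noteq> 0 \<and> Polynomial.degree p = m \<and> poly (map_poly of_rat p) z = 0"
    for m
    using that assms(2) algebraic_deg_le_Rats_iff by blast
qed

lemma ext_degree_eq_Irr:
  assumes "(C.algebraic over \<rat>) z"
  shows "ext_degree z = Polynomials.degree (C.Irr \<rat> z)"
  using algebraic_deg_le_Irr[OF subfield_Rats assms] algebraic_deg_le_imp_Irr(2)[OF subfield_Rats]
  by (rule ext_degree_eqI)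

definition smooth :: "nat \<Rightarrow> nat \<Rightarrow> bool" where
  "smooth d n \<longleftrightarrow> (\<forall>p. prime p \<and> p dvd n \<longrightarrow> p \<le> d)"

lemma smooth_mult: "smooth d m \<Longrightarrow> smooth d n \<Longrightarrow> smooth d (m * n)"
  unfolding smooth_def by (meson prime_dvd_mult_nat)

lemma smooth_le: "0 < n \<Longrightarrow> n \<le> d \<Longrightarrow> smooth d n"
  unfolding smooth_def by (meson dvd_imp_le order.trans)

lemma smooth_dvd: "smooth d n \<Longrightarrow> m dvd n \<Longrightarrow> smooth d m"
  unfolding smooth_def by (meson dvd_trans)

lemma smooth_pos:
  assumes "smooth d n"
  shows "0 < n"
proof (rule ccontr)
  obtain p where "prime p" "d < p"
    using bigger_prime by blast
  moreover assume "\<not> 0 < n"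
  ultimately show False
    using assms unfolding smooth_def by auto
qed

lemma smooth_two_imp_power_of_two:
  assumes "smooth 2 n"
  obtains k where "n = 2 ^ k"
proof -
  have n: "0 < n"
    using smooth_pos[OF assms] .
  have "\<forall>p \<in># prime_factorization n. p = 2"
    using assms unfolding smooth_def by (metis in_prime_factors_iff le_antisym prime_ge_2_nat)
  then have twos: "image_mset (\<lambda>_. 2) (prime_factorization n) = prime_factorization n"
    by (simp add: image_mset_cong[of _ "\<lambda>_. 2" id])
  have "n = \<Prod>\<^sub># (prime_factorization n)"
    using prod_mset_prime_factorization_nat[OF n] by simp
  also have "\<dots> = 2 ^ size (prime_factorization n)"
    by (metis twos prod_mset_constant)
  finally show ?thesis
    using that by blast
qed

section \<open>Subfields of smooth degree\<close>

definition smooth_field :: "nat \<Rightarrow> complex set \<Rightarrow> bool" where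
  "smooth_field d K \<longleftrightarrow>
     subfield K complex_field \<and> C.finite_dimension \<rat> K \<and> smooth d ((C.dim over \<rat>) K)"

lemma smooth_field_Rats: "smooth_field d \<rat>"
proof -
  have "C.dimension 1 \<rat> \<rat>"
    by (rule C.dimension_one[OF subfield_Rats])
  then show ?thesis
    using C.finite_dimensionI C.dimI[OF subfield_Rats]
    by (auto simp: smooth_field_def smooth_def subfield_Rats)
qed

lemma complex_subfield_dim_pos:
  assumes E: "subfield E complex_field" and fd: "C.finite_dimension \<rat> E"
  shows "0 < (C.dim over \<rat>) E"
proof (rule ccontr)
  assume "\<not> 0 < (C.dim over \<rat>) E"
  then have "C.dimension 0 \<rat> E"
    using C.finite_dimensionE[OF subfield_Rats fd] by (simp add: over_def)
  then have "E = {0}"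
    using C.dimension_zero[OF subfield_Rats] by simp
  moreover have "1 \<in> E"
    using complex_subfield_closed(2)[OF E] .
  ultimately show False
    by simp
qed

lemma smooth_field_simple_extension:
  assumes K: "smooth_field d K" and z: "algebraic_deg_le K d z"
  shows "smooth_field d (C.simple_extension K z)"
    and "K \<subseteq> C.simple_extension K z" and "z \<in> C.simple_extension K z"
proof -
  let ?E = "C.simple_extension K z"
  have sub: "subfield K complex_field" and fd: "C.finite_dimension \<rat> K"
    and sm: "smooth d ((C.dim over \<rat>) K)"
    using K unfolding smooth_field_def by blast+
  have alg: "(C.algebraic over K) z"
    using algebraic_deg_le_imp_Irr(1)[OF sub z] .
  have E: "subfield ?E complex_field"
    using C.simple_extension_is_subfield[OF sub] alg by simp
  have fdE: "C.finite_dimension K ?E"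
    using C.finite_dimension_simple_extension[OF sub] alg by simp
  note tower = C.telescopic_base_dim[OF subfield_Rats sub fd fdE]
  have "(C.dim over K) ?E = Polynomials.degree (C.Irr K z)"
    using C.simple_extension_dim[OF sub _ alg] by simp
  then have "(C.dim over K) ?E \<le> d"
    using algebraic_deg_le_imp_Irr(2)[OF sub z] by simp
  moreover have "0 < (C.dim over K) ?E"
    using complex_subfield_dim_pos[OF E tower(1)] tower(2) by simp
  ultimately have "smooth d ((C.dim over K) ?E)"
    by (rule smooth_le[rotated])
  then show "smooth_field d ?E"
    using E tower sm smooth_mult unfolding smooth_field_def by simp
  show "K \<subseteq> ?E" "z \<in> ?E"
    using C.simple_extension_incl[OF subfieldE(3)[OF sub]] C.simple_extension_mem[OF subfieldE(1)[OF sub]]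
    by simp_all
qed

lemma Span_mono_scalars:
  assumes "K \<subseteq> F"
  shows "C.Span K Us \<subseteq> C.Span F Us"
proof (induction Us)
  case (Cons u Us)
  show ?case
  proof
    fix x assume "x \<in> C.Span K (u # Us)"
    then obtain k v where "k \<in> K" "v \<in> C.Span K Us" "x = k * u + v"
      by (auto simp: C.line_extension_mem_iff)
    then show "x \<in> C.Span F (u # Us)"
      using Cons.IH assms by (auto simp: C.line_extension_mem_iff)
  qed
qed simp

lemma finite_dimension_over_intermediate:
  assumes F: "subfield F complex_field" and K: "subfield K complex_field" and "F \<subseteq> K"
    and fd: "C.finite_dimension \<rat> K"
  shows "C.finite_dimension F K"
proof -
  obtain Us where Us: "set Us \<subseteq> carrier complex_field" "C.Span \<rat> Us = K"
    using C.exists_base[OF subfield_Rats C.finite_dimensionE[OF subfield_Rats fd]] by auto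
  have "subalgebra F K complex_field"
  proof (rule subalgebra.intro)
    show "subgroup K (add_monoid complex_field)"
      using subring.axioms(1)[OF subfieldE(1)[OF K]] .
    show "subalgebra_axioms F K complex_field"
      using \<open>F \<subseteq> K\<close> complex_subfield_closed(6)[OF K] by unfold_locales auto
  qed
  moreover have "set Us \<subseteq> K"
    using C.Span_base_incl[OF subfield_Rats Us(1)] Us(2) by simp
  ultimately have "C.Span F Us \<subseteq> K"
    by (rule C.subalgebra_Span_incl[OF F])
  moreover have "K \<subseteq> C.Span F Us"
    using Span_mono_scalars[OF Rats_subset_complex_subfield[OF F], of Us] Us(2) by simp
  ultimately show ?thesis
    using C.Span_finite_dimension[OF F Us(1)] by (simp add: subset_antisym)
qed

lemma smooth_field_ext_degree:
  assumes K: "smooth_field d K" and "\<alpha> \<in> K"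
  shows "algebraic \<alpha>" and "smooth d (ext_degree \<alpha>)"
proof -
  have sub: "subfield K complex_field" and fd: "C.finite_dimension \<rat> K"
    and sm: "smooth d ((C.dim over \<rat>) K)"
    using K unfolding smooth_field_def by blast+
  have alg: "(C.algebraic over \<rat>) \<alpha>"
    using C.finite_dimension_imp_algebraic[OF subfield_Rats subfieldE(1)[OF sub] fd \<open>\<alpha> \<in> K\<close>] .
  have "algebraic_deg_le \<rat> (ext_degree \<alpha>) \<alpha>"
    using algebraic_deg_le_Irr[OF subfield_Rats alg] ext_degree_eq_Irr[OF alg] by simp
  then show "algebraic \<alpha>"
    unfolding algebraic_deg_le_def algebraic_altdef by blast
  let ?F = "C.simple_extension \<rat> \<alpha>"
  have F: "subfield ?F complex_field"
    using C.simple_extension_is_subfield[OF subfield_Rats] alg by simp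
  have "?F \<subseteq> K"
    using C.simple_extension_subring_incl[OF subfieldE(1)[OF sub] Rats_subset_complex_subfield[OF sub]
        \<open>\<alpha> \<in> K\<close>] .
  then have "C.finite_dimension ?F K"
    using finite_dimension_over_intermediate[OF F sub _ fd] by simp
  moreover have fdF: "C.finite_dimension \<rat> ?F"
    using C.finite_dimension_simple_extension[OF subfield_Rats] alg by simp
  ultimately have "(C.dim over \<rat>) K = (C.dim over \<rat>) ?F * (C.dim over ?F) K"
    using C.telescopic_base_dim(2)[OF subfield_Rats F fdF] by simp
  moreover have "(C.dim over \<rat>) ?F = ext_degree \<alpha>"
    using C.simple_extension_dim[OF subfield_Rats _ alg] ext_degree_eq_Irr[OF alg] by simp
  ultimately show "smooth d (ext_degree \<alpha>)"
    using sm smooth_dvd by (metis dvd_triv_left)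
qed

section \<open>Computation trees\<close>

text \<open>\<open>D\<close> is the degree bound of \<open>RootOf\<close> nodes in \<open>computes\<close>; \<open>d\<close> bounds the degree of every
computed value over any field containing the operands and their conjugates.\<close>

definition instr_deg_le :: "nat \<Rightarrow> nat \<Rightarrow> instr \<Rightarrow> bool" where
  "instr_deg_le d D ins \<longleftrightarrow> 1 \<le> d \<and> (is_sqrt ins \<longrightarrow> 2 \<le> d) \<and> (is_root ins \<longrightarrow> D \<le> d)"

fun tree_deg_le :: "nat \<Rightarrow> nat \<Rightarrow> ctree \<Rightarrow> bool" where
  "tree_deg_le d D Stop = True"
| "tree_deg_le d D (Comp ins t) = (instr_deg_le d D ins \<and> tree_deg_le d D t)"
| "tree_deg_le d D (Dec a t1 t2) = (tree_deg_le d D t1 \<and> tree_deg_le d D t2)"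

lemma root_tree_deg_le: "1 \<le> D \<Longrightarrow> root_tree t \<Longrightarrow> tree_deg_le D D t"
  by (induction t) (auto simp: instr_deg_le_def)

lemma quad_tree_deg_le: "quad_tree t \<Longrightarrow> tree_deg_le 2 D t"
  by (induction t) (auto simp: instr_deg_le_def)

lemma opnd_ok_map_cnj [simp]: "opnd_ok (map cnj env) a = opnd_ok env a"
  by (cases a) auto

lemma opnd_val_map_cnj [simp]: "opnd_ok env a \<Longrightarrow> opnd_val (map cnj env) a = cnj (opnd_val env a)"
  by (cases a) auto

lemma opnd_val_mem:
  assumes "subfield K complex_field" "set env \<subseteq> K" "opnd_ok env a"
  shows "opnd_val env a \<in> K"
  using assms Rats_subset_complex_subfield[OF assms(1)] by (cases a) auto

text \<open>Conjugation is a field automorphism fixing the integer constants, so conjugating the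
operands conjugates the result.\<close>

lemma instr_res_map_cnj:
  assumes "instr_res D env ins z"
  shows "instr_res D (map cnj env) ins (cnj z)"
  using assms
proof cases
  case (root cs)
  have "Poly (map (opnd_val (map cnj env)) cs) = map_poly cnj (Poly (map (opnd_val env) cs))"
    using root(2) by (intro poly_eqI) (simp add: coeff_map_poly nth_default_def list_all_iff)
  with root show ?thesis
    unfolding root(1)
    by (intro instr_res.root) (auto simp: list_all_iff degree_map_poly map_poly_eq_0_iff)
qed (use instr_res.intros[of "map cnj env"] in \<open>auto simp flip: complex_cnj_power\<close>)

lemma instr_res_algebraic_deg_le:
  assumes res: "instr_res D env ins z" and K: "subfield K complex_field"
    and env: "set env \<subseteq> K" "cnj ` set env \<subseteq> K" and ok: "instr_deg_le d D ins"
  shows "algebraic_deg_le K d z"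
proof -
  have opnd: "opnd_val env a \<in> K" if "opnd_ok env a" for a
    using opnd_val_mem[OF K env(1) that] .
  have opnd_cnj: "cnj (opnd_val env a) \<in> K" if "opnd_ok env a" for a
    using opnd_val_mem[OF K _, of "map cnj env" a] env(2) that by simp
  have mem: "algebraic_deg_le K d x" if "x \<in> K" for x
    using algebraic_deg_le_power_mem[OF K, of x 1] that ok by (simp add: instr_deg_le_def)
  note closed = complex_subfield_closed[OF K]
  show ?thesis
    using res
  proof cases
    case (root cs)
    let ?q = "Poly (map (opnd_val env) cs)"
    have "coeff ?q i \<in> K" for i
      using root(2) opnd closed(1) by (auto simp: nth_default_def list_all_iff)
    then show ?thesis
      using root ok unfolding algebraic_deg_le_def instr_deg_le_def by auto
  next
    case (sqrt a)
    then show ?thesis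
      using algebraic_deg_le_power_mem[OF K, of z 2] opnd ok by (simp add: instr_deg_le_def)
  next
    case (conj a)
    then show ?thesis using mem opnd_cnj by simp
  qed (simp_all add: mem opnd closed)
qed

lemma computes_in_smooth_field:
  assumes "computes D env t w" and "tree_deg_le d D t" and "smooth_field d K"
    and "set env \<subseteq> K" and "cnj ` set env \<subseteq> K"
  shows "\<exists>K'. smooth_field d K' \<and> w \<in> K'"
  using assms
proof (induction arbitrary: K rule: computes.induct)
  case (here D env ins z t)
  have sub: "subfield K complex_field"
    using here.prems(2) unfolding smooth_field_def by blast
  have "instr_deg_le d D ins"
    using here.prems(1) by simp
  then have "algebraic_deg_le K d z"
    by (rule instr_res_algebraic_deg_le[OF here.hyps sub here.prems(3,4)])
  from smooth_field_simple_extension[OF here.prems(2) this] show ?case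
    by blast
next
  case (below D env ins z t w)
  have sub: "subfield K complex_field"
    using below.prems(2) unfolding smooth_field_def by blast
  have ok: "instr_deg_le d D ins" and "tree_deg_le d D t"
    using below.prems(1) by simp_all
  have "set (map cnj env) \<subseteq> K" "cnj ` set (map cnj env) \<subseteq> K"
    using below.prems(3,4) by (simp_all add: image_image)
  then have z: "algebraic_deg_le K d z" and zc: "algebraic_deg_le K d (cnj z)"
    using instr_res_algebraic_deg_le[OF below.hyps(1) sub below.prems(3,4) ok]
      instr_res_algebraic_deg_le[OF instr_res_map_cnj[OF below.hyps(1)] sub _ _ ok] by blast+
  note K1 = smooth_field_simple_extension[OF below.prems(2) z]
  note K2 = smooth_field_simple_extension[OF K1(1) algebraic_deg_le_mono[OF K1(2) zc]]
  have "set (env @ [z]) \<subseteq> C.simple_extension (C.simple_extension K z) (cnj z)"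
    and "cnj ` set (env @ [z]) \<subseteq> C.simple_extension (C.simple_extension K z) (cnj z)"
    using below.prems(3,4) K1(2,3) K2(2,3) by auto
  then show ?case
    using below.IH[OF \<open>tree_deg_le d D t\<close> K2(1)] by blast
qed simp_all

theorem lemma5:
  fixes D :: nat and \<alpha> :: complex
  assumes "D \<ge> 1"
  shows "(computable_root D \<alpha> \<longrightarrow>
            algebraic \<alpha> \<and> (\<forall>p. prime p \<and> p dvd ext_degree \<alpha> \<longrightarrow> p \<le> D))
       \<and> (computable_quad \<alpha> \<longrightarrow> algebraic \<alpha> \<and> (\<exists>k. ext_degree \<alpha> = 2 ^ k))"
proof (rule conjI; rule impI)
  assume "computable_root D \<alpha>"
  then obtain t where t: "root_tree t" "computes D [] t \<alpha>"
    unfolding computable_root_def by blast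
  obtain K where "smooth_field D K" "\<alpha> \<in> K"
    using computes_in_smooth_field[OF t(2) root_tree_deg_le[OF assms t(1)] smooth_field_Rats] by auto
  then show "algebraic \<alpha> \<and> (\<forall>p. prime p \<and> p dvd ext_degree \<alpha> \<longrightarrow> p \<le> D)"
    using smooth_field_ext_degree unfolding smooth_def by blast
next
  assume "computable_quad \<alpha>"
  then obtain t where t: "quad_tree t" "computes 0 [] t \<alpha>"
    unfolding computable_quad_def by blast
  obtain K where "smooth_field 2 K" "\<alpha> \<in> K"
    using computes_in_smooth_field[OF t(2) quad_tree_deg_le[OF t(1)] smooth_field_Rats] by auto
  then show "algebraic \<alpha> \<and> (\<exists>k. ext_degree \<alpha> = 2 ^ k)"
    using smooth_field_ext_degree smooth_two_imp_power_of_two by metis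
qed

end
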